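(* Let $n_\text{S}, n_\text{R}\ge 1$ be integers and let $\gamma_\text{S}>0$ and $\lambda_{\text{eq}}^G>0$ be real numbers. Let $Y$ be an Erlang random variable with shape and rate parameters both equal to $n_\text{S}$, i.e. with density $f_Y(y)=\frac{n_\text{S}^{n_\text{S}}}{(n_\text{S}-1)!}y^{n_\text{S}-1}e^{-n_\text{S}y}$ for $y>0$, and let $X_1,\dots,X_{n_\text{R}}$ be i.i.d. exponential random variables with unit mean, independent of $Y$. Put $V=\lambda_{\text{eq}}^G\sum_{j=1}^{n_\text{R}}X_j$ (an Erlang random variable with shape $n_\text{R}$ and rate $1/\lambda_{\text{eq}}^G$) and $$\gamma_\text{D}=\gamma_\text{S}\,Y\,\frac{V}{1+V}.$$ Then for every $x>0$, writing $w=\frac{x}{\gamma_\text{S}}$, $$\mathbb{P}(\gamma_\text{D}\le x)=1-2(n_\text{S}w)^{n_\text{S}}e^{-n_\text{S}w}\sum_{m=0}^{n_\text{R}-1}\sum_{n=0}^{n_\text{S}-1}\frac{n_\text{S}^m(\lambda_{\text{eq}}^G n_\text{S}w)^{-\frac{m+n+1}{2}}\,w^m}{m!\,n!\,(n_\text{S}-n-1)!}\,\mathrm{K}_{m-n-1}\!\left(2\sqrt{\frac{n_\text{S}w}{\lambda_{\text{eq}}^G}}\right),$$ where $\mathrm{K}_\nu$ denotes the modified Bessel function of the second kind of order $\nu$.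
   Context: This is the distribution of the received SNR $\gamma_\text{D}$ at the single-antenna destination of a dual-hop amplify-and-forward relay system (source with $n_\text{S}$ antennas, relay with $n_\text{R}$ antennas, Rayleigh fading) when the relay antennas are uncorrelated (correlation matrix equal to the identity), and the relay allocates the same gain $\lambda_{\text{eq}}^G$ to every eigenmode; $\gamma_\text{S}$ is the source transmit SNR. The claim as stated is purely about the random variables defined in it. *)

theory Defs
  imports "HOL-Probability.Probability"
begin

text \<open>Modified Bessel function of the second kind, via the standard integral
representation K_nu(z) = int_0^infty exp(-z cosh t) cosh(nu t) dt, valid for z > 0.\<close>
definition besselK :: "real \<Rightarrow> real \<Rightarrow> real" where
  "besselK \<nu> z = (LBINT t:{0<..}. exp (- z * cosh t) * cosh (\<nu> * t))"

end

theory Submission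
  imports Defs
begin

(*
  Put w = x / gS, b = w / lamG and S = X_1 + ... + X_nR, an Erlang variable of shape nR and rate 1
  independent of Y. Given Y = y, the event gamma_D > x is empty for y <= w and otherwise says
  S > b / (y - w), whose probability is a Poisson tail sum. Averaging over the Erlang density of Y
  after the shift y = w + t and expanding (w + t)^(nS - 1) binomially leaves integrals
  int_0^oo t^(nu - 1) exp (- a t - b / t) dt; the substitution t = sqrt (b / a) e^s turns the
  exponent into - 2 sqrt (a b) cosh s, so each equals 2 (b / a)^(nu / 2) K_nu (2 sqrt (a b)) by the
  cosh representation of K_nu.
*)

lemma borel_measurable_cosh [measurable]: "(cosh :: real \<Rightarrow> real) \<in> borel_measurable borel"
  by (intro borel_measurable_continuous_onI continuous_intros)

lemma besselK_minus: "besselK (- \<nu>) z = besselK \<nu> z"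
  unfolding besselK_def by simp

lemma besselK_nonneg: "0 \<le> besselK \<nu> z"
  unfolding besselK_def set_lebesgue_integral_def
  by (rule integral_nonneg_AE) (auto simp: indicator_def less_imp_le[OF cosh_real_pos])

lemma besselK_integrand_le:
  fixes z \<nu> s :: real
  assumes z: "z > 0" and s: "s \<ge> 0"
  shows "exp (- z * cosh s) * cosh (\<nu> * s) \<le> exp ((\<bar>\<nu>\<bar> + 1)\<^sup>2 / z) * exp (- s)"
proof -
  have "s\<^sup>2 / 4 \<le> cosh s"
    using exp_lower_Taylor_quadratic[OF s] exp_ge_add_one_self[of "- s"] by (simp add: cosh_def)
  then have "exp (- z * cosh s) \<le> exp (- z * (s\<^sup>2 / 4))"
    using z by simp
  moreover have "cosh (\<nu> * s) \<le> exp \<bar>\<nu> * s\<bar>"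
    by (cases "\<nu> * s \<ge> 0") (auto simp: cosh_def)
  ultimately have "exp (- z * cosh s) * cosh (\<nu> * s) \<le> exp (- z * (s\<^sup>2 / 4)) * exp (\<bar>\<nu>\<bar> * s)"
    using s by (intro mult_mono) (auto simp: abs_mult)
  also have "\<dots> = exp (- z * (s\<^sup>2 / 4) + \<bar>\<nu>\<bar> * s)"
    by (rule exp_add[symmetric])
  also have "\<dots> \<le> exp ((\<bar>\<nu>\<bar> + 1)\<^sup>2 / z - s)"
  proof -
    have "0 \<le> (z * s - 2 * (\<bar>\<nu>\<bar> + 1))\<^sup>2 / (4 * z)" using z by simp
    also have "\<dots> = z * s\<^sup>2 / 4 - (\<bar>\<nu>\<bar> + 1) * s + (\<bar>\<nu>\<bar> + 1)\<^sup>2 / z"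
      using z by (simp add: field_simps power2_eq_square)
    finally show ?thesis by (simp add: ring_distribs)
  qed
  finally show ?thesis by (simp add: exp_diff exp_minus field_simps)
qed

lemma set_integrable_besselK_integrand:
  fixes z \<nu> :: real
  assumes "z > 0"
  shows "set_integrable lborel {0<..} (\<lambda>s. exp (- z * cosh s) * cosh (\<nu> * s))"
proof (rule set_integrable_bound)
  show "set_integrable lborel {0<..} (\<lambda>s. exp ((\<bar>\<nu>\<bar> + 1)\<^sup>2 / z) * exp (- s))"
    using integrable_I0i_exp_mscale[of 1] by (intro set_integrable_mult_right) simp
  show "AE s in lborel. s \<in> {0<..} \<longrightarrow>
      norm (exp (- z * cosh s) * cosh (\<nu> * s)) \<le> norm (exp ((\<bar>\<nu>\<bar> + 1)\<^sup>2 / z) * exp (- s))"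
    using besselK_integrand_le[OF assms] by (auto intro!: AE_I2 simp: abs_of_nonneg)
qed (simp add: set_borel_measurable_def, measurable)

lemma besselK_eq_nn_integral:
  assumes "z > 0"
  shows "ennreal (besselK \<nu> z)
    = (\<integral>\<^sup>+s. ennreal (exp (- z * cosh s) * cosh (\<nu> * s)) * indicator {0<..} s \<partial>lborel)"
proof -
  have "besselK \<nu> z = (\<integral>s. indicator {0<..} s * (exp (- z * cosh s) * cosh (\<nu> * s)) \<partial>lborel)"
    unfolding besselK_def set_lebesgue_integral_def by simp
  also have "ennreal \<dots> = (\<integral>\<^sup>+s. ennreal (indicator {0<..} s * (exp (- z * cosh s) * cosh (\<nu> * s))) \<partial>lborel)"
    using set_integrable_besselK_integrand[OF assms, of \<nu>]
    by (intro nn_integral_eq_integral[symmetric])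
       (auto simp: set_integrable_def less_imp_le[OF cosh_real_pos])
  finally show ?thesis
    by (simp add: indicator_mult_ennreal mult.commute)
qed

lemma UN_exp_atLeastAtMost:
  fixes c :: real
  assumes c: "c > 0"
  shows "(\<Union>n::nat. {c * exp (- real n) .. c * exp (real n)}) = {0<..}"
proof (intro equalityI subsetI)
  fix t :: real assume "t \<in> {0<..}"
  obtain n :: nat where n: "\<bar>ln (t / c)\<bar> \<le> real n"
    using real_arch_simple by blast
  have "c * exp (- real n) \<le> c * exp (ln (t / c))" "c * exp (ln (t / c)) \<le> c * exp (real n)"
    using c n by (intro mult_left_mono; simp)+
  moreover have "c * exp (ln (t / c)) = t"
    using c \<open>t \<in> {0<..}\<close> by simp
  ultimately show "t \<in> (\<Union>n::nat. {c * exp (- real n) .. c * exp (real n)})"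
    by auto
qed (use c in \<open>auto intro: less_le_trans[rotated]\<close>)

lemma nn_integral_exp_substitution:
  fixes f :: "real \<Rightarrow> real" and c :: real
  assumes c: "c > 0" and [measurable]: "f \<in> borel_measurable borel"
  shows "(\<integral>\<^sup>+t. ennreal (f t) * indicator {0<..} t \<partial>lborel)
    = (\<integral>\<^sup>+s. ennreal (f (c * exp s) * (c * exp s)) \<partial>lborel)"
proof -
  define A where "A n = {c * exp (- real n) .. c * exp (real n)}" for n :: nat
  define B where "B n = {- real n .. real n}" for n :: nat
  let ?D1 = "density lborel (\<lambda>t. ennreal (f t))"
  let ?D2 = "density lborel (\<lambda>s. ennreal (f (c * exp s) * (c * exp s)))"
  have AB: "emeasure ?D1 (A n) = emeasure ?D2 (B n)" for n
  proof -
    have "emeasure ?D1 (A n) = (\<integral>\<^sup>+t. ennreal (f t * indicator (A n) t) \<partial>lborel)"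
      by (auto simp: A_def emeasure_density intro!: nn_integral_cong split: split_indicator)
    also have "\<dots> = (\<integral>\<^sup>+s. ennreal (f (c * exp s) * (c * exp s) * indicator (B n) s) \<partial>lborel)"
      unfolding A_def B_def
      by (subst nn_integral_substitution[where g="\<lambda>s. c * exp s" and g'="\<lambda>s. c * exp s"])
         (auto intro!: derivative_eq_intros continuous_intros simp: set_borel_measurable_def c less_imp_le)
    also have "\<dots> = emeasure ?D2 (B n)"
      by (auto simp: B_def emeasure_density intro!: nn_integral_cong split: split_indicator)
    finally show ?thesis .
  qed
  have incA: "incseq A"
    using c by (auto simp: incseq_def A_def intro: order_trans[OF mult_left_mono] order_trans[OF _ mult_left_mono])
  have incB: "incseq B"
    by (auto simp: incseq_def B_def)
  have UA: "(\<Union>n. A n) = {0<..}"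
    unfolding A_def using c by (rule UN_exp_atLeastAtMost)
  have UB: "(\<Union>n. B n) = UNIV"
  proof (intro equalityI subsetI)
    fix s :: real
    obtain n :: nat where "\<bar>s\<bar> \<le> real n"
      using real_arch_simple by blast
    then have "s \<in> B n"
      by (simp add: B_def abs_le_iff)
    then show "s \<in> (\<Union>n. B n)" by blast
  qed simp
  have "(\<integral>\<^sup>+t. ennreal (f t) * indicator {0<..} t \<partial>lborel) = emeasure ?D1 (\<Union>n. A n)"
    by (simp add: UA emeasure_density)
  also have "\<dots> = (SUP n. emeasure ?D1 (A n))"
    by (rule SUP_emeasure_incseq[symmetric, OF _ incA]) (auto simp: A_def)
  also have "\<dots> = (SUP n. emeasure ?D2 (B n))"
    by (simp add: AB)
  also have "\<dots> = emeasure ?D2 (\<Union>n. B n)"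
    by (rule SUP_emeasure_incseq[OF _ incB]) (auto simp: B_def)
  also have "\<dots> = (\<integral>\<^sup>+s. ennreal (f (c * exp s) * (c * exp s)) \<partial>lborel)"
    by (simp add: UB emeasure_density)
  finally show ?thesis .
qed

lemma nn_integral_exp_minus_cosh:
  fixes z \<nu> :: real
  assumes "z > 0"
  shows "(\<integral>\<^sup>+s. ennreal (exp (\<nu> * s) * exp (- z * cosh s)) \<partial>lborel) = ennreal (2 * besselK \<nu> z)"
proof -
  define h where "h s = exp (\<nu> * s) * exp (- z * cosh s)" for s
  have [measurable]: "h \<in> borel_measurable borel"
    unfolding h_def by measurable
  have h_nonneg: "0 \<le> h s" for s
    by (simp add: h_def)
  have "(\<integral>\<^sup>+s. ennreal (h s) \<partial>lborel)
      = (\<integral>\<^sup>+s. ennreal (h s) * indicator {0<..} s + ennreal (h s) * indicator {..0} s \<partial>lborel)"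
    by (intro nn_integral_cong) (auto split: split_indicator)
  also have "\<dots> = (\<integral>\<^sup>+s. ennreal (h s) * indicator {0<..} s \<partial>lborel)
      + (\<integral>\<^sup>+s. ennreal (h s) * indicator {..0} s \<partial>lborel)"
    by (rule nn_integral_add) auto
  also have "(\<integral>\<^sup>+s. ennreal (h s) * indicator {..0} s \<partial>lborel)
      = (\<integral>\<^sup>+s. ennreal (h (- s)) * indicator {..0} (- s) \<partial>lborel)"
    by (subst nn_integral_real_affine[where c="-1" and t=0]) auto
  also have "(\<integral>\<^sup>+s. ennreal (h (- s)) * indicator {..0} (- s) \<partial>lborel)
      = (\<integral>\<^sup>+s. ennreal (h (- s)) * indicator {0<..} s \<partial>lborel)"
    using AE_lborel_singleton[of 0]
    by (intro nn_integral_cong_AE) (auto elim!: eventually_mono split: split_indicator)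
  also have "(\<integral>\<^sup>+s. ennreal (h s) * indicator {0<..} s \<partial>lborel) + \<dots>
      = (\<integral>\<^sup>+s. ennreal (h s) * indicator {0<..} s + ennreal (h (- s)) * indicator {0<..} s \<partial>lborel)"
    by (rule nn_integral_add[symmetric]) auto
  also have "\<dots> = (\<integral>\<^sup>+s. 2 * (ennreal (exp (- z * cosh s) * cosh (\<nu> * s)) * indicator {0<..} s) \<partial>lborel)"
  proof (intro nn_integral_cong)
    fix s :: real
    have "h s + h (- s) = 2 * (exp (- z * cosh s) * cosh (\<nu> * s))"
      by (simp add: h_def cosh_field_def algebra_simps)
    then show "ennreal (h s) * indicator {0<..} s + ennreal (h (- s)) * indicator {0<..} s
        = 2 * (ennreal (exp (- z * cosh s) * cosh (\<nu> * s)) * indicator {0<..} s)"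
      using h_nonneg[of s] h_nonneg[of "- s"] cosh_real_pos[of "\<nu> * s"]
      by (auto simp: ennreal_plus[symmetric] ennreal_mult simp del: ennreal_plus
          split: split_indicator)
  qed
  also have "\<dots> = 2 * ennreal (besselK \<nu> z)"
    by (simp add: nn_integral_cmult besselK_eq_nn_integral[OF assms])
  finally show ?thesis
    by (simp add: h_def ennreal_mult besselK_nonneg)
qed

lemma nn_integral_powr_exp_besselK:
  fixes a b \<nu> :: real
  assumes a: "a > 0" and b: "b > 0"
  shows "(\<integral>\<^sup>+t. ennreal (t powr (\<nu> - 1) * exp (- a * t - b / t)) * indicator {0<..} t \<partial>lborel)
    = ennreal (2 * (b / a) powr (\<nu> / 2) * besselK \<nu> (2 * sqrt (a * b)))"
proof -
  define c where "c = sqrt (b / a)"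
  define z where "z = 2 * sqrt (a * b)"
  have c: "c > 0" and z: "z > 0"
    using a b by (simp_all add: c_def z_def)
  have ac: "a * c = sqrt (a * b)"
  proof -
    have "sqrt (a * b) = sqrt (a\<^sup>2 * (b / a))"
      using a by (simp add: power2_eq_square)
    also have "\<dots> = a * c"
      using a unfolding c_def by (subst real_sqrt_mult) simp
    finally show ?thesis ..
  qed
  have bc: "b / c = sqrt (a * b)"
  proof -
    have "sqrt (a * b) * c = sqrt (b\<^sup>2)"
      using a unfolding c_def by (simp add: power2_eq_square flip: real_sqrt_mult)
    then show ?thesis
      using b c by (simp add: field_simps)
  qed
  have subst: "(c * exp s) powr (\<nu> - 1) * exp (- a * (c * exp s) - b / (c * exp s)) * (c * exp s)
      = c powr \<nu> * (exp (\<nu> * s) * exp (- z * cosh s))" for s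
  proof -
    have "(c * exp s) powr (\<nu> - 1) * (c * exp s) = (c * exp s) powr \<nu>"
      using c by (simp add: powr_diff)
    also have "\<dots> = c powr \<nu> * exp (\<nu> * s)"
      using c by (simp add: powr_mult exp_powr_real mult.commute)
    finally have power: "(c * exp s) powr (\<nu> - 1) * (c * exp s) = c powr \<nu> * exp (\<nu> * s)" .
    have left: "a * (c * exp s) = sqrt (a * b) * exp s"
      by (simp only: mult.assoc[symmetric] ac)
    have right: "b / (c * exp s) = sqrt (a * b) * exp (- s)"
      using bc c by (simp add: exp_minus field_simps)
    have "- a * (c * exp s) - b / (c * exp s) = - z * cosh s"
      unfolding right by (simp add: z_def cosh_field_def algebra_simps left)
    with power show ?thesis
      by (simp add: mult_ac)
  qed
  have "(\<integral>\<^sup>+t. ennreal (t powr (\<nu> - 1) * exp (- a * t - b / t)) * indicator {0<..} t \<partial>lborel)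
      = (\<integral>\<^sup>+s. ennreal (c powr \<nu>) * ennreal (exp (\<nu> * s) * exp (- z * cosh s)) \<partial>lborel)"
    using subst by (subst nn_integral_exp_substitution[OF c]) (auto simp: ennreal_mult)
  also have "\<dots> = ennreal (c powr \<nu>) * (\<integral>\<^sup>+s. ennreal (exp (\<nu> * s) * exp (- z * cosh s)) \<partial>lborel)"
    by (rule nn_integral_cmult) auto
  also have "\<dots> = ennreal (c powr \<nu> * (2 * besselK \<nu> z))"
    unfolding nn_integral_exp_minus_cosh[OF z] by (simp add: ennreal_mult besselK_nonneg)
  also have "c powr \<nu> = (b / a) powr (\<nu> / 2)"
    using a b by (simp add: c_def powr_half_sqrt[symmetric] powr_powr)
  finally show ?thesis
    by (simp add: z_def mult_ac)
qed

lemma nn_integral_erlang_density_greaterThan: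
  fixes l c :: real
  assumes l: "l > 0" and c: "c \<ge> 0"
  shows "(\<integral>\<^sup>+x. ennreal (erlang_density k l x) * indicator {c<..} x \<partial>lborel)
    = ennreal (\<Sum>n\<le>k. (l * c) ^ n * exp (- l * c) / fact n)"
proof -
  have "1 = (\<integral>\<^sup>+x. ennreal (erlang_density k l x * x ^ 0) \<partial>lborel)"
    using nn_integral_erlang_ith_moment[OF l, of k 0] by simp
  also have "\<dots> = (\<integral>\<^sup>+x. ennreal (erlang_density k l x) * indicator {c<..} x
      + ennreal (erlang_density k l x) * indicator {..c} x \<partial>lborel)"
    by (intro nn_integral_cong) (auto split: split_indicator)
  also have "\<dots> = (\<integral>\<^sup>+x. ennreal (erlang_density k l x) * indicator {c<..} x \<partial>lborel)
      + ennreal (erlang_CDF k l c)"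
    using l by (subst nn_integral_add) (auto simp: nn_integral_erlang_density)
  finally have "(\<integral>\<^sup>+x. ennreal (erlang_density k l x) * indicator {c<..} x \<partial>lborel)
      = 1 - ennreal (erlang_CDF k l c)"
    by (metis ennreal_add_diff_cancel_right ennreal_neq_top)
  also have "\<dots> = ennreal (1 - erlang_CDF k l c)"
    using erlang_CDF_nonneg[OF l] by (simp add: ennreal_1[symmetric] ennreal_minus del: ennreal_1)
  finally show ?thesis
    using c by (simp add: erlang_CDF_def)
qed

lemma less_mult_ratio_iff:
  fixes w lam y s :: real
  assumes w: "w > 0" and lam: "lam > 0" and s: "s \<ge> 0"
  shows "w < y * (lam * s / (1 + lam * s)) \<longleftrightarrow> w < y \<and> (w / lam) / (y - w) < s"
proof -
  have "w < y * (lam * s / (1 + lam * s)) \<longleftrightarrow> w < lam * s * (y - w)"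
    using lam s by (simp add: less_divide_eq add_pos_nonneg algebra_simps)
  also have "\<dots> \<longleftrightarrow> w < y \<and> (w / lam) / (y - w) < s"
  proof (cases "w < y")
    case True
    then show ?thesis
      using lam by (simp add: divide_less_eq mult_ac)
  next
    case False
    then have "lam * s * (y - w) \<le> 0"
      using lam s by (simp add: mult_nonneg_nonpos)
    then show ?thesis
      using w False by simp
  qed
  finally show ?thesis .
qed

lemma nn_integral_erlang_density_ratio_gt:
  fixes w lam y :: real
  assumes w: "w > 0" and lam: "lam > 0"
  shows "(\<integral>\<^sup>+s. ennreal (erlang_density k 1 s) * indicator {s. w < y * (lam * s / (1 + lam * s))} s \<partial>lborel)
    = ennreal (if w < y then \<Sum>m\<le>k. ((w / lam) / (y - w)) ^ m * exp (- ((w / lam) / (y - w))) / fact m else 0)"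
proof -
  have "(\<integral>\<^sup>+s. ennreal (erlang_density k 1 s) * indicator {s. w < y * (lam * s / (1 + lam * s))} s \<partial>lborel)
      = (\<integral>\<^sup>+s. (if w < y then ennreal (erlang_density k 1 s) * indicator {(w / lam) / (y - w)<..} s else 0) \<partial>lborel)"
    using less_mult_ratio_iff[OF w lam]
    by (intro nn_integral_cong) (auto simp: erlang_density_def not_le split: split_indicator)
  also have "\<dots> = ennreal (if w < y then \<Sum>m\<le>k. ((w / lam) / (y - w)) ^ m * exp (- ((w / lam) / (y - w))) / fact m else 0)"
    using w lam by (simp add: nn_integral_erlang_density_greaterThan)
  finally show ?thesis .
qed

definition erlang_poisson_coeff :: "real \<Rightarrow> nat \<Rightarrow> real \<Rightarrow> real \<Rightarrow> nat \<Rightarrow> nat \<Rightarrow> real" where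
  "erlang_poisson_coeff a N w b m n =
     a ^ Suc N * exp (- a * w) * w ^ (N - n) * b ^ m / (fact n * fact (N - n) * fact m)"

lemma erlang_poisson_coeff_nonneg: "a > 0 \<Longrightarrow> w > 0 \<Longrightarrow> b > 0 \<Longrightarrow> 0 \<le> erlang_poisson_coeff a N w b m n"
  by (simp add: erlang_poisson_coeff_def)

lemma erlang_density_shift_times_poisson_tail:
  fixes a w b t :: real
  assumes w: "w > 0" and t: "t > 0"
  shows "erlang_density N a (w + t) * (\<Sum>m\<le>k. (b / t) ^ m * exp (- (b / t)) / fact m)
    = (\<Sum>m\<le>k. \<Sum>n\<le>N. erlang_poisson_coeff a N w b m n * (t powr (real n - real m) * exp (- a * t - b / t)))"
proof -
  have "erlang_density N a (w + t)
      = (\<Sum>n\<le>N. a ^ Suc N * exp (- a * w) * w ^ (N - n) / (fact n * fact (N - n)) * (t ^ n * exp (- a * t)))"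
  proof -
    have "exp (- a * (w + t)) = exp (- a * w) * exp (- a * t)"
      by (simp add: exp_add[symmetric] algebra_simps)
    then have "erlang_density N a (w + t) = a ^ Suc N * exp (- a * w) * exp (- a * t) / fact N * (t + w) ^ N"
      using w t by (simp add: erlang_density_def add.commute)
    also have "\<dots> = (\<Sum>n\<le>N. a ^ Suc N * exp (- a * w) * exp (- a * t) / fact N * (of_nat (N choose n) * t ^ n * w ^ (N - n)))"
      by (simp add: binomial_ring sum_distrib_left)
    also have "\<dots> = (\<Sum>n\<le>N. a ^ Suc N * exp (- a * w) * w ^ (N - n) / (fact n * fact (N - n)) * (t ^ n * exp (- a * t)))"
      by (intro sum.cong refl) (simp add: binomial_fact field_simps)
    finally show ?thesis .
  qed
  moreover have "(\<Sum>m\<le>k. (b / t) ^ m * exp (- (b / t)) / fact m)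
      = (\<Sum>m\<le>k. b ^ m / fact m * (exp (- b / t) / t ^ m))"
    by (simp add: power_divide mult.commute)
  ultimately have "erlang_density N a (w + t) * (\<Sum>m\<le>k. (b / t) ^ m * exp (- (b / t)) / fact m)
      = (\<Sum>m\<le>k. \<Sum>n\<le>N. a ^ Suc N * exp (- a * w) * w ^ (N - n) / (fact n * fact (N - n)) * (t ^ n * exp (- a * t))
          * (b ^ m / fact m * (exp (- b / t) / t ^ m)))"
    by (simp add: sum_product sum.swap[of _ "{..N}"])
  also have "\<dots> = (\<Sum>m\<le>k. \<Sum>n\<le>N. erlang_poisson_coeff a N w b m n * (t powr (real n - real m) * exp (- a * t - b / t)))"
  proof (intro sum.cong refl)
    fix m n
    have "t powr (real n - real m) = t ^ n / t ^ m"
      using t by (simp add: powr_diff powr_realpow)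
    moreover have "exp (- a * t - b / t) = exp (- a * t) * exp (- b / t)"
      by (simp add: exp_add[symmetric])
    ultimately show "a ^ Suc N * exp (- a * w) * w ^ (N - n) / (fact n * fact (N - n)) * (t ^ n * exp (- a * t))
        * (b ^ m / fact m * (exp (- b / t) / t ^ m))
      = erlang_poisson_coeff a N w b m n * (t powr (real n - real m) * exp (- a * t - b / t))"
      using t by (simp add: erlang_poisson_coeff_def field_simps)
  qed
  finally show ?thesis .
qed

lemma nn_integral_erlang_density_poisson_tail:
  fixes a w b :: real
  assumes a: "a > 0" and w: "w > 0" and b: "b > 0"
  shows "(\<integral>\<^sup>+y. ennreal (erlang_density N a y) *
      ennreal (if w < y then \<Sum>m\<le>k. (b / (y - w)) ^ m * exp (- (b / (y - w))) / fact m else 0) \<partial>lborel)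
    = ennreal (\<Sum>m\<le>k. \<Sum>n\<le>N. erlang_poisson_coeff a N w b m n *
        (2 * (b / a) powr ((real n - real m + 1) / 2) * besselK (real n - real m + 1) (2 * sqrt (a * b))))"
proof -
  define g where "g m n t = t powr (real n - real m) * exp (- a * t - b / t)" for m n :: nat and t :: real
  have [measurable]: "g m n \<in> borel_measurable borel" for m n
    unfolding g_def by measurable
  have g_nonneg: "0 \<le> g m n t" for m n t
    by (simp add: g_def)
  note coeff_nonneg = erlang_poisson_coeff_nonneg[OF a w b]
  have "(\<integral>\<^sup>+y. ennreal (erlang_density N a y) *
      ennreal (if w < y then \<Sum>m\<le>k. (b / (y - w)) ^ m * exp (- (b / (y - w))) / fact m else 0) \<partial>lborel)
    = (\<integral>\<^sup>+t. ennreal (erlang_density N a (w + t)) *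
      ennreal (if 0 < t then \<Sum>m\<le>k. (b / t) ^ m * exp (- (b / t)) / fact m else 0) \<partial>lborel)"
    using lborel_integral_real_affine
    by (subst nn_integral_real_affine[where c=1 and t=w]) (auto intro!: nn_integral_cong)
  also have "\<dots> = (\<integral>\<^sup>+t. (\<Sum>m\<le>k. \<Sum>n\<le>N. ennreal (erlang_poisson_coeff a N w b m n) *
      (ennreal (g m n t) * indicator {0<..} t)) \<partial>lborel)"
  proof (intro nn_integral_cong)
    fix t :: real
    show "ennreal (erlang_density N a (w + t)) *
        ennreal (if 0 < t then \<Sum>m\<le>k. (b / t) ^ m * exp (- (b / t)) / fact m else 0)
      = (\<Sum>m\<le>k. \<Sum>n\<le>N. ennreal (erlang_poisson_coeff a N w b m n) * (ennreal (g m n t) * indicator {0<..} t))"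
    proof (cases "t > 0")
      case True
      have "ennreal (erlang_density N a (w + t)) * ennreal (\<Sum>m\<le>k. (b / t) ^ m * exp (- (b / t)) / fact m)
          = ennreal (\<Sum>m\<le>k. \<Sum>n\<le>N. erlang_poisson_coeff a N w b m n * g m n t)"
        using erlang_density_shift_times_poisson_tail[OF w True, where N=N and a=a and k=k and b=b] a
        by (simp add: g_def ennreal_mult'[symmetric])
      also have "\<dots> = (\<Sum>m\<le>k. \<Sum>n\<le>N. ennreal (erlang_poisson_coeff a N w b m n * g m n t))"
        using coeff_nonneg g_nonneg by (simp add: sum_nonneg)
      finally show ?thesis
        using True coeff_nonneg g_nonneg by (simp add: ennreal_mult)
    qed simp
  qed
  also have "\<dots> = (\<Sum>m\<le>k. \<Sum>n\<le>N. ennreal (erlang_poisson_coeff a N w b m n) *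
      (\<integral>\<^sup>+t. ennreal (g m n t) * indicator {0<..} t \<partial>lborel))"
    by (simp add: nn_integral_sum nn_integral_cmult)
  also have "\<dots> = (\<Sum>m\<le>k. \<Sum>n\<le>N. ennreal (erlang_poisson_coeff a N w b m n *
      (2 * (b / a) powr ((real n - real m + 1) / 2) * besselK (real n - real m + 1) (2 * sqrt (a * b)))))"
  proof (intro sum.cong refl)
    fix m n :: nat
    show "ennreal (erlang_poisson_coeff a N w b m n) * (\<integral>\<^sup>+t. ennreal (g m n t) * indicator {0<..} t \<partial>lborel)
      = ennreal (erlang_poisson_coeff a N w b m n *
          (2 * (b / a) powr ((real n - real m + 1) / 2) * besselK (real n - real m + 1) (2 * sqrt (a * b))))"
      using nn_integral_powr_exp_besselK[OF a b, of "real n - real m + 1"] coeff_nonneg besselK_nonneg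
      by (simp add: g_def ennreal_mult)
  qed
  also have "\<dots> = ennreal (\<Sum>m\<le>k. \<Sum>n\<le>N. erlang_poisson_coeff a N w b m n *
      (2 * (b / a) powr ((real n - real m + 1) / 2) * besselK (real n - real m + 1) (2 * sqrt (a * b))))"
    using coeff_nonneg besselK_nonneg by (simp add: sum_nonneg)
  finally show ?thesis .
qed

lemma erlang_poisson_coeff_powr_eq:
  fixes a w lam :: real
  assumes a: "a > 0" and w: "w > 0" and lam: "lam > 0" and n: "n \<le> N"
  shows "erlang_poisson_coeff a N w (w / lam) m n * (2 * ((w / lam) / a) powr ((real n - real m + 1) / 2))
    = 2 * (a * w) ^ Suc N * exp (- a * w) *
      (a ^ m * (lam * a * w) powr (- (real m + real n + 1) / 2) * w ^ m / (fact m * fact n * fact (N - n)))"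
proof -
  \<comment> \<open>both sides are positive; their logarithms are linear in \<open>ln a\<close>, \<open>ln w\<close>, \<open>ln lam\<close>\<close>
  have "ln (erlang_poisson_coeff a N w (w / lam) m n * (2 * ((w / lam) / a) powr ((real n - real m + 1) / 2)))
      = ln (2 * (a * w) ^ Suc N * exp (- a * w) *
      (a ^ m * (lam * a * w) powr (- (real m + real n + 1) / 2) * w ^ m / (fact m * fact n * fact (N - n))))"
    using a w lam n
    by (simp add: erlang_poisson_coeff_def ln_mult ln_div ln_realpow ln_powr of_nat_diff algebra_simps add_divide_distrib diff_divide_distrib)
  then show ?thesis
    using a w lam by (simp add: erlang_poisson_coeff_def)
qed

lemma erlang_poisson_coeff_besselK_eq:
  fixes a w lam :: real
  assumes a: "a > 0" and w: "w > 0" and lam: "lam > 0" and n: "n \<le> N"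
  shows "erlang_poisson_coeff a N w (w / lam) m n *
      (2 * ((w / lam) / a) powr ((real n - real m + 1) / 2) * besselK (real n - real m + 1) (2 * sqrt (a * (w / lam))))
    = 2 * (a * w) ^ Suc N * exp (- a * w) *
      (a ^ m * (lam * a * w) powr (- (real m + real n + 1) / 2) * w ^ m / (fact m * fact n * fact (N - n))
        * besselK (real_of_int (int m - int n - 1)) (2 * sqrt (a * w / lam)))"
proof -
  have "besselK (real_of_int (int m - int n - 1)) (2 * sqrt (a * w / lam))
      = besselK (real n - real m + 1) (2 * sqrt (a * (w / lam)))"
    using besselK_minus[of "real n - real m + 1"] by simp
  with erlang_poisson_coeff_powr_eq[OF a w lam n, of m] show ?thesis
    by (simp only: mult.assoc[symmetric])
qed

lemma (in prob_space) emeasure_indep_var_distributed: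
  fixes Y S :: "'a \<Rightarrow> real"
  assumes Y: "distributed M lborel Y fY" and S: "distributed M lborel S fS"
    and indep: "indep_var lborel Y lborel S" and A: "A \<in> sets (lborel \<Otimes>\<^sub>M lborel)"
  shows "emeasure M {\<omega> \<in> space M. (Y \<omega>, S \<omega>) \<in> A}
    = (\<integral>\<^sup>+y. fY y * (\<integral>\<^sup>+s. fS s * indicator A (y, s) \<partial>lborel) \<partial>lborel)"
proof -
  have [measurable]: "fY \<in> borel_measurable borel" "fS \<in> borel_measurable borel"
    using distributed_borel_measurable[OF Y] distributed_borel_measurable[OF S] by simp_all
  have joint: "distributed M (lborel \<Otimes>\<^sub>M lborel) (\<lambda>\<omega>. (Y \<omega>, S \<omega>)) (\<lambda>(y, s). fY y * fS s)"
    using distributed_joint_indep[OF lborel.sigma_finite_measure_axioms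
        lborel.sigma_finite_measure_axioms Y S indep] .
  have "emeasure M {\<omega> \<in> space M. (Y \<omega>, S \<omega>) \<in> A} = emeasure M ((\<lambda>\<omega>. (Y \<omega>, S \<omega>)) -` A \<inter> space M)"
    by (rule arg_cong[where f="emeasure M"]) auto
  also have "\<dots> = (\<integral>\<^sup>+p. (\<lambda>(y, s). fY y * fS s) p * indicator A p \<partial>(lborel \<Otimes>\<^sub>M lborel))"
    by (rule distributed_emeasure[OF joint A])
  also have "\<dots> = (\<integral>\<^sup>+y. \<integral>\<^sup>+s. fY y * (fS s * indicator A (y, s)) \<partial>lborel \<partial>lborel)"
    using A by (subst lborel.nn_integral_fst[symmetric]) (auto simp: mult.assoc)
  also have "\<dots> = (\<integral>\<^sup>+y. fY y * (\<integral>\<^sup>+s. fS s * indicator A (y, s) \<partial>lborel) \<partial>lborel)"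
  proof (intro nn_integral_cong nn_integral_cmult)
    fix y :: real
    have "(\<lambda>s. indicator A (y, s) :: ennreal) \<in> borel_measurable lborel"
      using measurable_Pair2[OF borel_measurable_indicator[OF A]] by simp
    then show "(\<lambda>s. fS s * indicator A (y, s)) \<in> borel_measurable lborel"
      by measurable
  qed
  finally show ?thesis .
qed

lemma (in prob_space) sum_exponential_distributed_indep:
  fixes Y :: "'a \<Rightarrow> real" and X :: "'i \<Rightarrow> 'a \<Rightarrow> real"
  assumes I: "finite I" "I \<noteq> {}"
    and X: "\<And>j. j \<in> I \<Longrightarrow> distributed M lborel (X j) (exponential_density 1)"
    and indep: "indep_vars (\<lambda>_. borel) (\<lambda>i. case i of None \<Rightarrow> Y | Some j \<Rightarrow> X j) (insert None (Some ` I))"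
  shows "distributed M lborel (\<lambda>\<omega>. \<Sum>j\<in>I. X j \<omega>) (erlang_density (card I - 1) 1)"
    and "indep_var lborel Y lborel (\<lambda>\<omega>. \<Sum>j\<in>I. X j \<omega>)"
proof -
  define Z where "Z = (\<lambda>i. case i of None \<Rightarrow> Y | Some j \<Rightarrow> X j)"
  have sum_Z: "(\<lambda>\<omega>. \<Sum>i\<in>Some ` I. Z i \<omega>) = (\<lambda>\<omega>. \<Sum>j\<in>I. X j \<omega>)"
    by (simp add: Z_def sum.reindex)
  have "distributed M lborel (\<lambda>\<omega>. \<Sum>i\<in>Some ` I. Z i \<omega>) (erlang_density (card (Some ` I) - 1) 1)"
    using I X indep_vars_subset[OF indep[folded Z_def]]
    by (intro exponential_distributed_sum) (auto simp: Z_def)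
  then show "distributed M lborel (\<lambda>\<omega>. \<Sum>j\<in>I. X j \<omega>) (erlang_density (card I - 1) 1)"
    by (simp add: sum_Z card_image)
  have "indep_var borel Y borel (\<lambda>\<omega>. \<Sum>j\<in>I. X j \<omega>)"
    using indep_vars_sum[of "Some ` I" None Z] I indep[folded Z_def] by (simp add: Z_def sum.reindex)
  then show "indep_var lborel Y lborel (\<lambda>\<omega>. \<Sum>j\<in>I. X j \<omega>)"
    unfolding indep_var_def indep_vars_def by (simp add: case_bool_if)
qed

lemma (in prob_space) prob_erlang_mult_ratio_gt:
  fixes Y S :: "'a \<Rightarrow> real" and a w lam :: real
  assumes Y: "distributed M lborel Y (erlang_density N a)"
    and S: "distributed M lborel S (erlang_density k 1)"
    and indep: "indep_var lborel Y lborel S"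
    and a: "a > 0" and w: "w > 0" and lam: "lam > 0"
  shows "prob {\<omega> \<in> space M. w < Y \<omega> * (lam * S \<omega> / (1 + lam * S \<omega>))}
    = 2 * (a * w) ^ Suc N * exp (- a * w) *
        (\<Sum>m\<le>k. \<Sum>n\<le>N. a ^ m * (lam * a * w) powr (- (real m + real n + 1) / 2) * w ^ m
          / (fact m * fact n * fact (N - n))
          * besselK (real_of_int (int m - int n - 1)) (2 * sqrt (a * w / lam)))"
proof -
  define A where "A = {p :: real \<times> real. w < fst p * (lam * snd p / (1 + lam * snd p))}"
  have "{p \<in> space (lborel \<Otimes>\<^sub>M lborel). w < fst p * (lam * snd p / (1 + lam * snd p))}
      \<in> sets (lborel \<Otimes>\<^sub>M lborel)"
    by measurable
  then have A_sets: "A \<in> sets (lborel \<Otimes>\<^sub>M lborel)"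
    by (simp add: A_def space_pair_measure)
  have "emeasure M {\<omega> \<in> space M. w < Y \<omega> * (lam * S \<omega> / (1 + lam * S \<omega>))}
      = (\<integral>\<^sup>+y. ennreal (erlang_density N a y) *
          (\<integral>\<^sup>+s. ennreal (erlang_density k 1 s) * indicator {s. w < y * (lam * s / (1 + lam * s))} s \<partial>lborel) \<partial>lborel)"
    using emeasure_indep_var_distributed[OF Y S indep A_sets]
    by (simp add: A_def indicator_def)
  also have "\<dots> = (\<integral>\<^sup>+y. ennreal (erlang_density N a y) *
      ennreal (if w < y then \<Sum>m\<le>k. ((w / lam) / (y - w)) ^ m * exp (- ((w / lam) / (y - w))) / fact m else 0) \<partial>lborel)"
    by (simp only: nn_integral_erlang_density_ratio_gt[OF w lam])
  also have "\<dots> = ennreal (\<Sum>m\<le>k. \<Sum>n\<le>N. erlang_poisson_coeff a N w (w / lam) m n *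
        (2 * ((w / lam) / a) powr ((real n - real m + 1) / 2)
          * besselK (real n - real m + 1) (2 * sqrt (a * (w / lam)))))"
    using a w lam by (intro nn_integral_erlang_density_poisson_tail) auto
  finally have "prob {\<omega> \<in> space M. w < Y \<omega> * (lam * S \<omega> / (1 + lam * S \<omega>))}
      = (\<Sum>m\<le>k. \<Sum>n\<le>N. erlang_poisson_coeff a N w (w / lam) m n *
        (2 * ((w / lam) / a) powr ((real n - real m + 1) / 2)
          * besselK (real n - real m + 1) (2 * sqrt (a * (w / lam)))))"
    using a w lam
    by (simp add: emeasure_eq_measure sum_nonneg erlang_poisson_coeff_nonneg besselK_nonneg)
  also have "\<dots> = 2 * (a * w) ^ Suc N * exp (- a * w) *
        (\<Sum>m\<le>k. \<Sum>n\<le>N. a ^ m * (lam * a * w) powr (- (real m + real n + 1) / 2) * w ^ m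
          / (fact m * fact n * fact (N - n))
          * besselK (real_of_int (int m - int n - 1)) (2 * sqrt (a * w / lam)))"
    using erlang_poisson_coeff_besselK_eq[OF a w lam] by (simp add: sum_distrib_left)
  finally show ?thesis .
qed

theorem theorem2:
  fixes M :: "'a measure" and Y :: "'a \<Rightarrow> real" and X :: "nat \<Rightarrow> 'a \<Rightarrow> real"
    and nS nR :: nat and gS lamG x :: real
  assumes "prob_space M"
    and "nS \<ge> 1" and "nR \<ge> 1" and "gS > 0" and "lamG > 0"
    and Y_distr: "distributed M lborel Y (erlang_density (nS - 1) (real nS))"
    and X_distr: "\<And>j. j \<in> {1..nR} \<Longrightarrow> distributed M lborel (X j) (exponential_density 1)"
    and indep: "prob_space.indep_vars M (\<lambda>_. borel)
                  (\<lambda>i. case i of None \<Rightarrow> Y | Some j \<Rightarrow> X j) (insert None (Some ` {1..nR}))"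
    and "x > 0"
  shows "let V = (\<lambda>\<omega>. lamG * (\<Sum>j=1..nR. X j \<omega>));
             w = x / gS
         in measure M {\<omega> \<in> space M. gS * Y \<omega> * (V \<omega> / (1 + V \<omega>)) \<le> x}
            = 1 - 2 * (real nS * w) ^ nS * exp (- real nS * w) *
                (\<Sum>m<nR. \<Sum>n<nS.
                   real nS ^ m * (lamG * real nS * w) powr (- (real m + real n + 1) / 2) * w ^ m
                   / (fact m * fact n * fact (nS - n - 1))
                   * besselK (real_of_int (int m - int n - 1)) (2 * sqrt (real nS * w / lamG)))"
proof -
  interpret prob_space M by fact
  obtain N k where nS: "nS = Suc N" and nR: "nR = Suc k"
    using \<open>nS \<ge> 1\<close> \<open>nR \<ge> 1\<close> by (cases nS; cases nR) auto
  define w where "w = x / gS"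
  define S where "S \<omega> = (\<Sum>j=1..nR. X j \<omega>)" for \<omega>
  have w: "w > 0"
    using \<open>gS > 0\<close> \<open>x > 0\<close> by (simp add: w_def)
  have "distributed M lborel S (erlang_density (card {1..nR} - 1) 1)" and YS: "indep_var lborel Y lborel S"
    using sum_exponential_distributed_indep[OF _ _ X_distr indep] nR by (simp_all add: S_def[abs_def])
  then have S: "distributed M lborel S (erlang_density k 1)"
    using nR by simp
  have [measurable]: "Y \<in> borel_measurable M" "S \<in> borel_measurable M"
    using distributed_measurable[OF Y_distr] distributed_measurable[OF S] by simp_all
  define E where "E = {\<omega> \<in> space M. w < Y \<omega> * (lamG * S \<omega> / (1 + lamG * S \<omega>))}"
  have "prob E = 2 * (real nS * w) ^ nS * exp (- real nS * w) *
      (\<Sum>m<nR. \<Sum>n<nS. real nS ^ m * (lamG * real nS * w) powr (- (real m + real n + 1) / 2) * w ^ m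
        / (fact m * fact n * fact (nS - n - 1))
        * besselK (real_of_int (int m - int n - 1)) (2 * sqrt (real nS * w / lamG)))"
    using prob_erlang_mult_ratio_gt[OF _ S YS _ w \<open>lamG > 0\<close>, of N "real nS"] Y_distr
    unfolding E_def nS nR lessThan_Suc_atMost by simp
  moreover have "{\<omega> \<in> space M. gS * Y \<omega> * (lamG * S \<omega> / (1 + lamG * S \<omega>)) \<le> x} = space M - E"
    using \<open>gS > 0\<close> by (auto simp: E_def w_def pos_divide_less_eq mult.commute mult.left_commute)
  moreover have "E \<in> events"
    unfolding E_def by measurable
  ultimately show ?thesis
    unfolding Let_def w_def[symmetric] S_def[symmetric]
    by (simp add: prob_compl)
qed

end
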